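(* Let $\mathcal{D}$ be a distribution on $[n]$, $\varepsilon>0$, and let $\mathcal{P}$ be any bounded-derivative property of functions $f:[n]\to\mathbb{R}$. There is a tester for $\mathcal{P}$ with respect to $\mathcal{D}$ with proximity parameter $\varepsilon$ making $24\,\varepsilon^{-1}\Delta^*(\mathcal{D})$ queries.
   Context: A bounded-derivative property on $[n]$ is $\mathcal{P}=\{g:[n]\to\mathbb{R}: l(t)\le g(t+1)-g(t)\le u(t)\ \forall t\in[n-1]\}$ for some $l,u:[n-1]\to\mathbb{R}$ with $l(t)<u(t)$. A tester w.r.t. $\mathcal{D}$ with proximity parameter $\varepsilon$ knows $\mathcal{D}$, queries $f$, accepts with probability $>2/3$ if $f\in\mathcal{P}$ and rejects with probability $>2/3$ if $\min_{g\in\mathcal{P}}\Pr_{x\sim\mathcal{D}}[f(x)\ne g(x)]>\varepsilon$. $\Delta^*(\mathcal{D})$ is the minimum over binary search trees $T$ on $[n]$ of $\mathbb{E}_{v\sim\mathcal{D}}[\mathrm{depth}_T(v)]$, where depth is the number of edges to the root. *)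

theory Defs
  imports "HOL-Probability.Probability" "HOL-Library.Tree"
begin

definition in_bdp :: "nat \<Rightarrow> (nat \<Rightarrow> real) \<Rightarrow> (nat \<Rightarrow> real) \<Rightarrow> (nat \<Rightarrow> real) \<Rightarrow> bool" where
  "in_bdp n l u g \<longleftrightarrow> (\<forall>t\<in>{1..<n}. l t \<le> g (t+1) - g t \<and> g (t+1) - g t \<le> u t)"

definition dist_bdp :: "nat \<Rightarrow> (nat \<Rightarrow> real) \<Rightarrow> (nat \<Rightarrow> real) \<Rightarrow> nat pmf \<Rightarrow> (nat \<Rightarrow> real) \<Rightarrow> real" where
  "dist_bdp n l u D f = (INF g\<in>{g. in_bdp n l u g}. measure_pmf.prob D {x. f x \<noteq> g x})"

fun bst_depth :: "nat tree \<Rightarrow> nat \<Rightarrow> nat" where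
  "bst_depth Leaf v = 0"
| "bst_depth (Node l a r) v =
     (if v = a then 0 else if v < a then Suc (bst_depth l v) else Suc (bst_depth r v))"

definition bsts_on :: "nat \<Rightarrow> nat tree set" where
  "bsts_on n = {t. inorder t = [1..<n+1]}"

definition Delta_star :: "nat \<Rightarrow> nat pmf \<Rightarrow> real" where
  "Delta_star n D = Min ((\<lambda>t. measure_pmf.expectation D (\<lambda>v. real (bst_depth t v))) ` bsts_on n)"

text \<open>A deterministic adaptive query algorithm: either outputs a decision (True = accept)
  or queries a point x and continues depending on the real value f x.\<close>
datatype qalg = Out bool | Query nat "real \<Rightarrow> qalg"

primrec run :: "qalg \<Rightarrow> (nat \<Rightarrow> real) \<Rightarrow> bool" where
  "run (Out b) f = b"
| "run (Query x k) f = run (k (f x)) f"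

inductive at_most_queries :: "nat \<Rightarrow> qalg \<Rightarrow> bool" where
  "at_most_queries q (Out b)"
| "(\<And>r. at_most_queries q (k r)) \<Longrightarrow> at_most_queries (Suc q) (Query x k)"

definition is_tester :: "nat \<Rightarrow> (nat \<Rightarrow> real) \<Rightarrow> (nat \<Rightarrow> real) \<Rightarrow> nat pmf \<Rightarrow> real \<Rightarrow> nat \<Rightarrow> qalg pmf \<Rightarrow> bool" where
  "is_tester n l u D \<epsilon> q T \<longleftrightarrow>
     (\<forall>A\<in>set_pmf T. at_most_queries q A) \<and>
     (\<forall>f. in_bdp n l u f \<longrightarrow> measure_pmf.prob T {A. run A f} > 2/3) \<and>
     (\<forall>f. dist_bdp n l u D f > \<epsilon> \<longrightarrow> measure_pmf.prob T {A. \<not> run A f} > 2/3)"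

end

theory Submission
  imports Defs
begin

text \<open>Fix a binary search tree t on [n] of minimal expected depth \<Delta> = \<Delta>*(D), and call a key x
  good for f if f restricted to the search path of x extends to a member of the property.
  Extendability of f restricted to a set A is a pairwise condition on A, and two search paths always
  meet at a key between their endpoints; hence f restricted to all good keys extends, and f is
  \<epsilon>-far only if D gives the bad keys mass \<beta> > \<epsilon>. The tester draws s = \<lceil>3/\<epsilon>\<rceil> samples of D, queries
  f on the union of their search paths and rejects iff this restriction does not extend. Some sample
  is bad with probability at least 1 - (1 - \<beta>)^s \<ge> 1 - e^{-3}, and by Markov's inequality the paths
  contain at most 24\<Delta>/\<epsilon> keys except with probability 4/23; if there are more, the tester accepts.
  When \<epsilon> \<ge> min 1 \<Delta> nothing needs to be tested: the root is always good, so \<beta> \<le> \<Delta>.\<close>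

section \<open>Extending partial data\<close>

definition bdp_extendable ::
    "nat \<Rightarrow> (nat \<Rightarrow> real) \<Rightarrow> (nat \<Rightarrow> real) \<Rightarrow> nat set \<Rightarrow> (nat \<Rightarrow> real) \<Rightarrow> bool" where
  "bdp_extendable n l u A h \<longleftrightarrow> (\<exists>g. in_bdp n l u g \<and> (\<forall>x\<in>A. g x = h x))"

definition bdp_consistent ::
    "(nat \<Rightarrow> real) \<Rightarrow> (nat \<Rightarrow> real) \<Rightarrow> (nat \<Rightarrow> real) \<Rightarrow> nat \<Rightarrow> nat \<Rightarrow> bool" where
  "bdp_consistent l u h a b \<longleftrightarrow>
     (\<Sum>t\<in>{a..<b}. l t) \<le> h b - h a \<and> h b - h a \<le> (\<Sum>t\<in>{a..<b}. u t)"

lemma bdp_consistent_trans: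
  assumes "bdp_consistent l u h a b" "bdp_consistent l u h b c" "a \<le> b" "b \<le> c"
  shows "bdp_consistent l u h a c"
proof -
  have "(\<Sum>t\<in>{a..<c}. f t) = (\<Sum>t\<in>{a..<b}. f t) + (\<Sum>t\<in>{b..<c}. f t)" for f :: "nat \<Rightarrow> real"
    using assms(3,4) by (simp add: sum.atLeastLessThan_concat)
  with assms(1,2) show ?thesis unfolding bdp_consistent_def by auto
qed

lemma bdp_consistent_if_in_bdp:
  assumes g: "in_bdp n l u g" and "1 \<le> a" "a \<le> b" "b \<le> n"
  shows "bdp_consistent l u g a b"
  using \<open>a \<le> b\<close> \<open>b \<le> n\<close>
proof (induction b rule: dec_induct)
  case base
  then show ?case by (simp add: bdp_consistent_def)
next
  case (step k)
  then have "k \<in> {1..<n}" using \<open>1 \<le> a\<close> by auto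
  then have "l k \<le> g (k+1) - g k \<and> g (k+1) - g k \<le> u k" using g by (auto simp: in_bdp_def)
  with step show ?case by (auto simp: bdp_consistent_def)
qed

lemma bdp_consistent_if_extendable:
  assumes "bdp_extendable n l u A h" "A \<subseteq> {1..n}" "a \<in> A" "b \<in> A" "a \<le> b"
  shows "bdp_consistent l u h a b"
proof -
  obtain g where g: "in_bdp n l u g" "\<forall>x\<in>A. g x = h x"
    using assms(1) unfolding bdp_extendable_def by blast
  have "1 \<le> a" "b \<le> n" using assms(2-4) by auto
  then have "bdp_consistent l u g a b" using bdp_consistent_if_in_bdp[OF g(1)] assms(5) by blast
  then show ?thesis using g(2) assms(3,4) by (simp add: bdp_consistent_def)
qed

text \<open>The largest possible value of g t - g a for g in the property.\<close>
definition max_rise :: "(nat \<Rightarrow> real) \<Rightarrow> (nat \<Rightarrow> real) \<Rightarrow> nat \<Rightarrow> nat \<Rightarrow> real" where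
  "max_rise l u a t = (if a \<le> t then \<Sum>s\<in>{a..<t}. u s else - (\<Sum>s\<in>{t..<a}. l s))"

lemma max_rise_Suc_le: "l t \<le> u t \<Longrightarrow> max_rise l u a (Suc t) \<le> max_rise l u a t + u t"
  by (cases "a \<le> t"; cases "a = Suc t") (auto simp: max_rise_def sum.atLeast_Suc_lessThan)

lemma max_rise_Suc_ge: "l t \<le> u t \<Longrightarrow> max_rise l u a t + l t \<le> max_rise l u a (Suc t)"
  by (cases "a \<le> t"; cases "a = Suc t") (auto simp: max_rise_def sum.atLeast_Suc_lessThan)

lemma in_bdp_Min_max_rise:
  assumes "finite A" "A \<noteq> {}" "\<forall>t\<in>{1..<n}. l t \<le> u t"
  shows "in_bdp n l u (\<lambda>t. Min ((\<lambda>a. c a + max_rise l u a t) ` A))" (is "in_bdp n l u ?g")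
  unfolding in_bdp_def
proof
  have Min_attained: "\<exists>a\<in>A. ?g t = c a + max_rise l u a t" for t
  proof -
    have "?g t \<in> (\<lambda>a. c a + max_rise l u a t) ` A" using assms(1,2) by (intro Min_in) auto
    then show ?thesis by blast
  qed
  have Min_below: "?g t \<le> c a + max_rise l u a t" if "a \<in> A" for a t
    using assms(1) that by (intro Min_le) auto
  fix t assume "t \<in> {1..<n}"
  then have lu: "l t \<le> u t" using assms(3) by blast
  obtain a where a: "a \<in> A" "?g t = c a + max_rise l u a t" using Min_attained by blast
  obtain b where b: "b \<in> A" "?g (t+1) = c b + max_rise l u b (t+1)" using Min_attained by blast
  have "?g (t+1) \<le> ?g t + u t"
    using Min_below[OF a(1), of "t+1"] max_rise_Suc_le[of l t u a, OF lu] a(2) by simp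
  moreover have "?g t + l t \<le> ?g (t+1)"
    using Min_below[OF b(1), of t] max_rise_Suc_ge[of l t u b, OF lu] b(2) by simp
  ultimately show "l t \<le> ?g (t + 1) - ?g t \<and> ?g (t + 1) - ?g t \<le> u t" by simp
qed

text \<open>The extension is the lower envelope of the steepest upward cones through the data points,
  as in McShane's extension of Lipschitz functions.\<close>
lemma bdp_extendable_if_consistent:
  assumes "finite A" "\<forall>t\<in>{1..<n}. l t \<le> u t"
    and consistent: "\<forall>a\<in>A. \<forall>b\<in>A. a \<le> b \<longrightarrow> bdp_consistent l u h a b"
  shows "bdp_extendable n l u A h"
proof (cases "A = {}")
  case True
  have "in_bdp n l u (\<lambda>t. Min ((\<lambda>a. 0 + max_rise l u a t) ` {0}))"
    using assms(2) by (intro in_bdp_Min_max_rise) auto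
  with True show ?thesis unfolding bdp_extendable_def by blast
next
  case False
  define g where "g t = Min ((\<lambda>a. h a + max_rise l u a t) ` A)" for t
  have "g x = h x" if x: "x \<in> A" for x
  proof (rule antisym)
    have "g x \<le> h x + max_rise l u x x" unfolding g_def using assms(1) x by (intro Min_le) auto
    then show "g x \<le> h x" by (simp add: max_rise_def)
    have "g x \<in> (\<lambda>a. h a + max_rise l u a x) ` A"
      unfolding g_def using assms(1) False by (intro Min_in) auto
    then obtain b where b: "b \<in> A" "g x = h b + max_rise l u b x" by blast
    have "h x \<le> h b + max_rise l u b x"
    proof (cases "b \<le> x")
      case True
      then have "bdp_consistent l u h b x" using consistent x b(1) by blast
      with True show ?thesis by (simp add: bdp_consistent_def max_rise_def)
    next
      case False
      then have "bdp_consistent l u h x b" using consistent x b(1) by simp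
      with False show ?thesis by (simp add: bdp_consistent_def max_rise_def)
    qed
    then show "h x \<le> g x" using b(2) by simp
  qed
  moreover have "in_bdp n l u g" unfolding g_def using assms(1) False assms(2) by (rule in_bdp_Min_max_rise)
  ultimately show ?thesis unfolding bdp_extendable_def by blast
qed

lemma bdp_extendable_singleton: "\<forall>t\<in>{1..<n}. l t \<le> u t \<Longrightarrow> bdp_extendable n l u {a} h"
  by (rule bdp_extendable_if_consistent) (auto simp: bdp_consistent_def)

lemma bdp_extendable_subset: "bdp_extendable n l u A h \<Longrightarrow> B \<subseteq> A \<Longrightarrow> bdp_extendable n l u B h"
  unfolding bdp_extendable_def by blast

lemma dist_bdp_le_if_extendable:
  assumes "bdp_extendable n l u A f"
  shows "dist_bdp n l u D f \<le> measure_pmf.prob D (- A)"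
proof -
  obtain g where g: "in_bdp n l u g" "\<forall>x\<in>A. g x = f x"
    using assms unfolding bdp_extendable_def by blast
  have "dist_bdp n l u D f \<le> measure_pmf.prob D {x. f x \<noteq> g x}"
    unfolding dist_bdp_def using g(1) by (auto intro!: cINF_lower bdd_belowI[where m=0])
  also have "\<dots> \<le> measure_pmf.prob D (- A)"
    using g(2) by (intro measure_pmf.finite_measure_mono) auto
  finally show ?thesis .
qed

section \<open>Search paths and good keys\<close>

fun search_path :: "'a::linorder tree \<Rightarrow> 'a \<Rightarrow> 'a set" where
  "search_path Leaf v = {}"
| "search_path (Node l a r) v =
     insert a (if v = a then {} else if v < a then search_path l v else search_path r v)"

lemma finite_search_path [simp]: "finite (search_path t v)"
  by (induction t) auto

lemma search_path_subset: "search_path t v \<subseteq> set_tree t"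
  by (induction t) auto

lemma search_path_self: "bst t \<Longrightarrow> v \<in> set_tree t \<Longrightarrow> v \<in> search_path t v"
  by (induction t) auto

lemma card_search_path_le: "card (search_path t v) \<le> Suc (bst_depth t v)"
proof (induction t)
  case (Node l a r)
  let ?rest = "if v = a then {} else if v < a then search_path l v else search_path r v"
  have "card (insert a ?rest) \<le> Suc (card ?rest)" by (simp add: card_insert_if)
  with Node.IH show ?case by (auto split: if_splits)
qed simp

lemma search_paths_meet_between:
  assumes "bst t" "x \<in> set_tree t" "y \<in> set_tree t" "x \<le> y"
  shows "\<exists>z\<in>search_path t x \<inter> search_path t y. x \<le> z \<and> z \<le> y"
  using assms
proof (induction t)
  case Leaf
  then show ?case by simp
next
  case (Node l a r)
  consider "x \<le> a \<and> a \<le> y" | "y < a" | "a < x" using not_le by blast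
  then show ?case
  proof cases
    case 2
    then have "x < a" using Node.prems(4) by (rule order.strict_trans1[rotated])
    with 2 Node.prems(1-3) have "x \<in> set_tree l" "y \<in> set_tree l" by auto
    then obtain z where "z \<in> search_path l x \<inter> search_path l y" "x \<le> z" "z \<le> y"
      using Node.IH(1) Node.prems(1,4) by auto
    with 2 \<open>x < a\<close> show ?thesis by auto
  next
    case 3
    then have "a < y" using Node.prems(4) by (rule order.strict_trans2)
    with 3 Node.prems(1-3) have "x \<in> set_tree r" "y \<in> set_tree r" by auto
    then obtain z where "z \<in> search_path r x \<inter> search_path r y" "x \<le> z" "z \<le> y"
      using Node.IH(2) Node.prems(1,4) by auto
    with 3 \<open>a < y\<close> show ?thesis by auto
  qed auto
qed

definition good_keys ::
    "nat \<Rightarrow> (nat \<Rightarrow> real) \<Rightarrow> (nat \<Rightarrow> real) \<Rightarrow> nat tree \<Rightarrow> (nat \<Rightarrow> real) \<Rightarrow> nat set" where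
  "good_keys n l u t f = {x \<in> set_tree t. bdp_extendable n l u (search_path t x) f}"

lemma root_in_good_keys:
  "\<forall>t\<in>{1..<n}. l t \<le> u t \<Longrightarrow> a \<in> good_keys n l u (Node lt a rt) f"
  by (simp add: good_keys_def bdp_extendable_singleton)

lemma bdp_extendable_good_keys:
  assumes "bst t" "set_tree t \<subseteq> {1..n}" "\<forall>t\<in>{1..<n}. l t \<le> u t"
  shows "bdp_extendable n l u (good_keys n l u t f) f"
proof (rule bdp_extendable_if_consistent)
  have paths: "search_path t v \<subseteq> {1..n}" for v using search_path_subset assms(2) by blast
  show "\<forall>x\<in>good_keys n l u t f. \<forall>y\<in>good_keys n l u t f. x \<le> y \<longrightarrow> bdp_consistent l u f x y"
  proof (intro ballI impI)
    fix x y assume x: "x \<in> good_keys n l u t f" and y: "y \<in> good_keys n l u t f" and "x \<le> y"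
    then obtain z where z: "z \<in> search_path t x" "z \<in> search_path t y" "x \<le> z" "z \<le> y"
      using search_paths_meet_between[OF assms(1)] by (auto simp: good_keys_def)
    have "x \<in> search_path t x" "y \<in> search_path t y"
      using x y search_path_self[OF assms(1)] by (auto simp: good_keys_def)
    then have "bdp_consistent l u f x z" "bdp_consistent l u f z y"
      using x y z bdp_consistent_if_extendable[OF _ paths] by (auto simp: good_keys_def)
    then show "bdp_consistent l u f x y" using bdp_consistent_trans z(3,4) by blast
  qed
qed (use assms in \<open>auto simp: good_keys_def\<close>)

lemma dist_bdp_le_prob_bad_keys:
  assumes "bst t" "set_tree t \<subseteq> {1..n}" "\<forall>t\<in>{1..<n}. l t \<le> u t"
  shows "dist_bdp n l u D f \<le> measure_pmf.prob D (- good_keys n l u t f)"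
  using assms by (intro dist_bdp_le_if_extendable bdp_extendable_good_keys)

lemma bst_depth_le_height: "bst_depth t v \<le> height t"
  by (induction t) auto

lemma integrable_bst_depth: "integrable (measure_pmf D) (\<lambda>v. real (bst_depth t v))"
  by (rule measure_pmf.integrable_const_bound[where B="real (height t)"])
     (auto simp: bst_depth_le_height)

lemma prob_bad_keys_le_expected_depth:
  assumes "\<forall>t\<in>{1..<n}. l t \<le> u t" "set_pmf D \<subseteq> set_tree t"
  shows "measure_pmf.prob D (- good_keys n l u t f)
           \<le> measure_pmf.expectation D (\<lambda>v. real (bst_depth t v))"
proof (cases t)
  case Leaf
  then show ?thesis using assms(2) set_pmf_not_empty[of D] by simp
next
  case (Node lt a rt)
  have "measure_pmf.prob D (- good_keys n l u t f)
          = measure_pmf.prob D (- good_keys n l u t f \<inter> set_pmf D)"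
    by (simp add: measure_Int_set_pmf)
  also have "\<dots> \<le> measure_pmf.prob D {v \<in> space (measure_pmf D). 1 \<le> real (bst_depth t v)}"
    using root_in_good_keys[OF assms(1)] Node
    by (intro measure_pmf.finite_measure_mono) auto
  also have "\<dots> \<le> measure_pmf.expectation D (\<lambda>v. real (bst_depth t v)) / 1"
    by (intro integral_Markov_inequality_measure integrable_bst_depth) auto
  finally show ?thesis by simp
qed

lemma dist_bdp_le_expected_depth:
  assumes "bst t" "set_tree t \<subseteq> {1..n}" "set_pmf D \<subseteq> set_tree t" "\<forall>t\<in>{1..<n}. l t \<le> u t"
  shows "dist_bdp n l u D f \<le> measure_pmf.expectation D (\<lambda>v. real (bst_depth t v))"
  using dist_bdp_le_prob_bad_keys[OF assms(1,2,4)] prob_bad_keys_le_expected_depth[OF assms(4,3)]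
  by (rule order_trans)

lemma dist_bdp_le_1:
  assumes "\<forall>t\<in>{1..<n}. l t \<le> u t"
  shows "dist_bdp n l u D f \<le> 1"
  using dist_bdp_le_if_extendable[OF bdp_extendable_singleton[OF assms], of D f 1]
    measure_pmf.prob_le_1[of D] by (rule order_trans)

lemma finite_inorder_eq: "finite {t. inorder t = xs}"
proof (induction "length xs" arbitrary: xs rule: less_induct)
  case less
  let ?S = "insert Leaf (\<Union>i<length xs. (\<lambda>(l, r). Node l (xs!i) r) `
              ({t. inorder t = take i xs} \<times> {t. inorder t = drop (Suc i) xs}))"
  have "{t. inorder t = xs} \<subseteq> ?S"
  proof
    fix t assume "t \<in> {t. inorder t = xs}"
    then have t: "inorder t = xs" by simp
    show "t \<in> ?S"
    proof (cases t)
      case (Node l a r)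
      let ?i = "length (inorder l)"
      have "?i < length xs" "xs ! ?i = a" "take ?i xs = inorder l" "drop (Suc ?i) xs = inorder r"
        using t Node by (auto simp: nth_append)
      then show ?thesis using Node by force
    qed simp
  qed
  moreover have "finite ?S" using less by auto
  ultimately show ?case by (rule finite_subset)
qed

fun right_spine :: "'a list \<Rightarrow> 'a tree" where
  "right_spine [] = Leaf"
| "right_spine (x # xs) = Node Leaf x (right_spine xs)"

lemma inorder_right_spine: "inorder (right_spine xs) = xs"
  by (induction xs) auto

lemma bsts_on_finite: "finite (bsts_on n)" and bsts_on_nonempty: "bsts_on n \<noteq> {}"
  unfolding bsts_on_def using finite_inorder_eq inorder_right_spine by auto

lemma bst_if_bsts_on: "t \<in> bsts_on n \<Longrightarrow> bst t"
  by (simp add: bsts_on_def bst_iff_sorted_wrt_less del: upt_Suc)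

lemma set_tree_if_bsts_on: "t \<in> bsts_on n \<Longrightarrow> set_tree t = {1..n}"
  by (metis bsts_on_def mem_Collect_eq set_inorder set_upt atLeastLessThanSuc_atLeastAtMost Suc_eq_plus1)

lemma Delta_star_attained:
  "\<exists>t\<in>bsts_on n. Delta_star n D = measure_pmf.expectation D (\<lambda>v. real (bst_depth t v))"
proof -
  have "Delta_star n D \<in> (\<lambda>t. measure_pmf.expectation D (\<lambda>v. real (bst_depth t v))) ` bsts_on n"
    unfolding Delta_star_def using bsts_on_finite bsts_on_nonempty by (intro Min_in) auto
  then show ?thesis by auto
qed

fun query_all :: "nat list \<Rightarrow> (nat \<Rightarrow> real) \<Rightarrow> ((nat \<Rightarrow> real) \<Rightarrow> bool) \<Rightarrow> qalg" where
  "query_all [] acc k = Out (k acc)"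
| "query_all (x # xs) acc k = Query x (\<lambda>r. query_all xs (acc(x := r)) k)"

lemma run_query_all: "run (query_all xs acc k) f = k (\<lambda>y. if y \<in> set xs then f y else acc y)"
proof (induction xs arbitrary: acc)
  case (Cons x xs)
  have "run (query_all (x # xs) acc k) f = k (\<lambda>y. if y \<in> set xs then f y else (acc(x := f x)) y)"
    using Cons.IH by simp
  also have "(\<lambda>y. if y \<in> set xs then f y else (acc(x := f x)) y)
               = (\<lambda>y. if y \<in> set (x # xs) then f y else acc y)"
    by auto
  finally show ?case .
qed simp

lemma at_most_queries_query_all: "at_most_queries (length xs) (query_all xs acc k)"
  by (induction xs arbitrary: acc) (auto intro: at_most_queries.intros)

lemma at_most_queries_mono: "at_most_queries q A \<Longrightarrow> q \<le> q' \<Longrightarrow> at_most_queries q' A"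
proof (induction arbitrary: q' rule: at_most_queries.induct)
  case (1 q b)
  then show ?case by (auto intro: at_most_queries.intros)
next
  case (2 q k x)
  then obtain q'' where "q' = Suc q''" "q \<le> q''" by (cases q') auto
  with 2 show ?case by (auto intro: at_most_queries.intros)
qed

lemma is_tester_accept_all:
  assumes "\<forall>f. dist_bdp n l u D f \<le> \<epsilon>"
  shows "is_tester n l u D \<epsilon> 0 (return_pmf (Out True))"
proof -
  have "\<not> \<epsilon> < dist_bdp n l u D f" for f using assms by (simp add: not_less)
  then show ?thesis by (auto simp: is_tester_def intro: at_most_queries.intros)
qed

definition sampled_paths :: "nat tree \<Rightarrow> nat \<Rightarrow> (nat \<Rightarrow> nat) \<Rightarrow> nat set" where
  "sampled_paths t s \<omega> = (\<Union>i<s. search_path t (\<omega> i))"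

definition path_test ::
    "nat \<Rightarrow> (nat \<Rightarrow> real) \<Rightarrow> (nat \<Rightarrow> real) \<Rightarrow> nat tree \<Rightarrow> nat \<Rightarrow> nat \<Rightarrow> (nat \<Rightarrow> nat) \<Rightarrow> qalg" where
  "path_test n l u t s q \<omega> =
     (let S = sampled_paths t s \<omega> in
      if card S \<le> q then query_all (sorted_list_of_set S) (\<lambda>_. 0) (bdp_extendable n l u S)
      else Out True)"

definition path_tester ::
    "nat \<Rightarrow> (nat \<Rightarrow> real) \<Rightarrow> (nat \<Rightarrow> real) \<Rightarrow> nat pmf \<Rightarrow> nat tree \<Rightarrow> nat \<Rightarrow> nat \<Rightarrow> qalg pmf" where
  "path_tester n l u D t s q = map_pmf (path_test n l u t s q) (Pi_pmf {..<s} 0 (\<lambda>_. D))"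

lemma finite_sampled_paths: "finite (sampled_paths t s \<omega>)"
  by (simp add: sampled_paths_def)

lemma card_sampled_paths_le: "card (sampled_paths t s \<omega>) \<le> Suc (\<Sum>i<s. bst_depth t (\<omega> i))"
proof (cases t)
  case (Node lt a rt)
  let ?t = "Node lt a rt"
  have "card (sampled_paths ?t s \<omega>) \<le> card (insert a (\<Union>i<s. search_path ?t (\<omega> i) - {a}))"
    unfolding sampled_paths_def by (intro card_mono) auto
  also have "\<dots> \<le> Suc (card (\<Union>i<s. search_path ?t (\<omega> i) - {a}))"
    by (rule card_insert_le_m1) auto
  also have "card (\<Union>i<s. search_path ?t (\<omega> i) - {a}) \<le> (\<Sum>i<s. card (search_path ?t (\<omega> i) - {a}))"
    by (rule card_UN_le) simp
  also have "\<dots> \<le> (\<Sum>i<s. bst_depth ?t (\<omega> i))"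
  proof (rule sum_mono)
    fix i
    have "a \<in> search_path ?t (\<omega> i)" by simp
    then show "card (search_path ?t (\<omega> i) - {a}) \<le> bst_depth ?t (\<omega> i)"
      using card_search_path_le[of ?t "\<omega> i"]
      by (simp add: card_Diff_singleton del: search_path.simps bst_depth.simps)
  qed
  finally show ?thesis using Node by simp
qed (simp add: sampled_paths_def)

lemma run_path_test:
  "run (path_test n l u t s q \<omega>) f
     \<longleftrightarrow> (card (sampled_paths t s \<omega>) \<le> q \<longrightarrow> bdp_extendable n l u (sampled_paths t s \<omega>) f)"
proof -
  let ?S = "sampled_paths t s \<omega>"
  have "bdp_extendable n l u ?S (\<lambda>y. if y \<in> set (sorted_list_of_set ?S) then f y else 0)
          \<longleftrightarrow> bdp_extendable n l u ?S f"
    using finite_sampled_paths unfolding bdp_extendable_def by auto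
  then show ?thesis unfolding path_test_def by (simp add: run_query_all Let_def)
qed

lemma at_most_queries_path_test: "at_most_queries q (path_test n l u t s q \<omega>)"
  unfolding path_test_def Let_def
  using at_most_queries_mono[OF at_most_queries_query_all] finite_sampled_paths
  by (auto intro: at_most_queries.intros)

lemma path_test_rejects:
  assumes "(\<Sum>j<s. bst_depth t (\<omega> j)) < q"
    and "i < s" "\<omega> i \<in> set_tree t" "\<omega> i \<notin> good_keys n l u t f"
  shows "\<not> run (path_test n l u t s q \<omega>) f"
proof -
  have "card (sampled_paths t s \<omega>) \<le> q"
    using card_sampled_paths_le[of t s \<omega>] assms(1) by simp
  moreover have "\<not> bdp_extendable n l u (sampled_paths t s \<omega>) f"
    using assms(2-4) bdp_extendable_subset unfolding good_keys_def sampled_paths_def by blast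
  ultimately show ?thesis by (simp add: run_path_test)
qed

lemma prob_Pi_pmf_all_in:
  "measure_pmf.prob (Pi_pmf {..<s} dflt (\<lambda>_. D)) (Pi {..<s} (\<lambda>_. A)) = measure_pmf.prob D A ^ s"
  by (subst measure_Pi_pmf_Pi) simp_all

lemma prob_Pi_pmf_sum_ge:
  fixes \<phi> :: "'a \<Rightarrow> real"
  assumes "\<And>v. 0 \<le> \<phi> v" "\<And>v. \<phi> v \<le> B" "0 < c"
  shows "measure_pmf.prob (Pi_pmf {..<s} dflt (\<lambda>_. D)) {\<omega>. c \<le> (\<Sum>i<s. \<phi> (\<omega> i))}
           \<le> real s * measure_pmf.expectation D \<phi> / c"
proof -
  let ?\<Omega> = "Pi_pmf {..<s} dflt (\<lambda>_. D)"
  have int_\<phi>: "integrable (measure_pmf M) (\<lambda>x. \<phi> (F x))" for M and F :: "'b \<Rightarrow> 'a"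
    using assms(1,2) by (intro measure_pmf.integrable_const_bound[where B=B]) auto
  have "measure_pmf.expectation ?\<Omega> (\<lambda>\<omega>. \<Sum>i<s. \<phi> (\<omega> i))
          = (\<Sum>i<s. measure_pmf.expectation (map_pmf (\<lambda>\<omega>. \<omega> i) ?\<Omega>) \<phi>)"
    using int_\<phi> by (subst Bochner_Integration.integral_sum) auto
  also have "\<dots> = real s * measure_pmf.expectation D \<phi>"
    by (simp add: Pi_pmf_component)
  finally have expectation: "measure_pmf.expectation ?\<Omega> (\<lambda>\<omega>. \<Sum>i<s. \<phi> (\<omega> i))
                               = real s * measure_pmf.expectation D \<phi>" .
  have "integrable (measure_pmf ?\<Omega>) (\<lambda>\<omega>. \<Sum>i<s. \<phi> (\<omega> i))"
    by (intro Bochner_Integration.integrable_sum int_\<phi>)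
  then have "measure_pmf.prob ?\<Omega> {\<omega> \<in> space (measure_pmf ?\<Omega>). c \<le> (\<Sum>i<s. \<phi> (\<omega> i))}
               \<le> measure_pmf.expectation ?\<Omega> (\<lambda>\<omega>. \<Sum>i<s. \<phi> (\<omega> i)) / c"
    using assms(1,3) by (intro integral_Markov_inequality_measure) (auto intro: sum_nonneg)
  then show ?thesis by (simp add: expectation)
qed

lemma prob_path_tester_rejects_ge:
  assumes "set_pmf D \<subseteq> set_tree t" "0 < q"
  shows "measure_pmf.prob (path_tester n l u D t s q) {A. \<not> run A f}
           \<ge> 1 - measure_pmf.prob D (good_keys n l u t f) ^ s
               - real s * measure_pmf.expectation D (\<lambda>v. real (bst_depth t v)) / real q"
proof -
  define \<Omega> where "\<Omega> = Pi_pmf {..<s} 0 (\<lambda>_. D)"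
  define Good where "Good = Pi {..<s} (\<lambda>_. good_keys n l u t f)"
  define Long where "Long = {\<omega>. real q \<le> (\<Sum>i<s. real (bst_depth t (\<omega> i)))}"
  have "- (Good \<union> Long) \<inter> set_pmf \<Omega> \<subseteq> {\<omega>. \<not> run (path_test n l u t s q \<omega>) f}"
  proof
    fix \<omega> assume \<omega>: "\<omega> \<in> - (Good \<union> Long) \<inter> set_pmf \<Omega>"
    then obtain i where i: "i < s" "\<omega> i \<notin> good_keys n l u t f" unfolding Good_def by auto
    have "\<omega> i \<in> set_pmf D"
      using \<omega> i(1) set_Pi_pmf_subset'[of "{..<s}" 0 "\<lambda>_. D"] by (auto simp: \<Omega>_def PiE_dflt_def)
    moreover have "(\<Sum>j<s. bst_depth t (\<omega> j)) < q"
      using \<omega> unfolding Long_def by (auto simp flip: of_nat_sum)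
    ultimately show "\<omega> \<in> {\<omega>. \<not> run (path_test n l u t s q \<omega>) f}"
      using path_test_rejects i assms(1) by blast
  qed
  then have "measure_pmf.prob \<Omega> (- (Good \<union> Long) \<inter> set_pmf \<Omega>)
               \<le> measure_pmf.prob (path_tester n l u D t s q) {A. \<not> run A f}"
    unfolding path_tester_def \<Omega>_def by (simp add: measure_pmf.finite_measure_mono)
  moreover have "measure_pmf.prob \<Omega> (- (Good \<union> Long) \<inter> set_pmf \<Omega>)
                   = 1 - measure_pmf.prob \<Omega> (Good \<union> Long)"
    using measure_pmf.prob_compl[of "Good \<union> Long" \<Omega>]
    by (simp add: measure_Int_set_pmf Compl_eq_Diff_UNIV)
  moreover have "measure_pmf.prob \<Omega> (Good \<union> Long)
                   \<le> measure_pmf.prob \<Omega> Good + measure_pmf.prob \<Omega> Long"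
    by (rule measure_Un_le) auto
  moreover have "measure_pmf.prob \<Omega> Good = measure_pmf.prob D (good_keys n l u t f) ^ s"
    unfolding \<Omega>_def Good_def by (rule prob_Pi_pmf_all_in)
  moreover have "measure_pmf.prob \<Omega> Long
                   \<le> real s * measure_pmf.expectation D (\<lambda>v. real (bst_depth t v)) / real q"
    unfolding \<Omega>_def Long_def using assms(2) bst_depth_le_height
    by (intro prob_Pi_pmf_sum_ge[where B="real (height t)"]) auto
  ultimately show ?thesis by linarith
qed

lemma exp_minus_3_le: "exp (-3::real) \<le> 64/729"
proof -
  have "(3/2)^6 \<le> exp (1/2::real) ^ 6"
    using exp_ge_add_one_self[of "1/2::real"] by (intro power_mono) auto
  also have "\<dots> = exp 3" by (simp flip: exp_of_nat_mult)
  finally show ?thesis by (simp add: exp_minus field_simps)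
qed

lemma is_tester_path_tester:
  assumes "bst t" "set_tree t \<subseteq> {1..n}" "set_pmf D \<subseteq> set_tree t" "\<forall>t\<in>{1..<n}. l t \<le> u t"
    and "3 \<le> real s * \<epsilon>" "0 < q"
    and "23 * real s * measure_pmf.expectation D (\<lambda>v. real (bst_depth t v)) \<le> 4 * real q"
  shows "is_tester n l u D \<epsilon> q (path_tester n l u D t s q)"
  unfolding is_tester_def
proof (intro conjI allI impI ballI)
  fix A assume "A \<in> set_pmf (path_tester n l u D t s q)"
  then show "at_most_queries q A" by (auto simp: path_tester_def at_most_queries_path_test)
next
  fix f assume "in_bdp n l u f"
  then have "set_pmf (path_tester n l u D t s q) \<subseteq> {A. run A f}"
    by (auto simp: path_tester_def run_path_test bdp_extendable_def)
  then have "measure_pmf.prob (path_tester n l u D t s q) {A. run A f} = 1"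
    by (simp add: measure_pmf.prob_eq_1 AE_measure_pmf_iff subset_eq)
  then show "measure_pmf.prob (path_tester n l u D t s q) {A. run A f} > 2/3" by simp
next
  fix f assume far: "dist_bdp n l u D f > \<epsilon>"
  define \<beta> where "\<beta> = measure_pmf.prob D (- good_keys n l u t f)"
  have "\<epsilon> < \<beta>"
    using far dist_bdp_le_prob_bad_keys[OF assms(1,2,4), of D f] unfolding \<beta>_def by linarith
  have "measure_pmf.prob D (good_keys n l u t f) ^ s = (1 - \<beta>) ^ s"
    using measure_pmf.prob_compl[of "- good_keys n l u t f" D] unfolding \<beta>_def by (simp add: Diff_eq)
  also have "\<dots> \<le> exp (- \<beta>) ^ s"
    using exp_ge_add_one_self[of "- \<beta>"] measure_pmf.prob_le_1[of D] unfolding \<beta>_def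
    by (intro power_mono) auto
  also have "\<dots> = exp (- (real s * \<beta>))" by (simp flip: exp_of_nat_mult)
  also have "\<dots> \<le> exp (-3)"
    using assms(5) \<open>\<epsilon> < \<beta>\<close> mult_left_mono[of \<epsilon> \<beta> "real s"] by simp
  finally have "measure_pmf.prob D (good_keys n l u t f) ^ s \<le> 64/729"
    using exp_minus_3_le by linarith
  moreover have "real s * measure_pmf.expectation D (\<lambda>v. real (bst_depth t v)) / real q \<le> 4/23"
    using assms(6,7) by (simp add: field_simps)
  ultimately show "measure_pmf.prob (path_tester n l u D t s q) {A. \<not> run A f} > 2/3"
    using prob_path_tester_rejects_ge[OF assms(3,6), where n=n and l=l and u=u and s=s and f=f]
    by linarith
qed

lemma sample_and_query_sizes:
  fixes \<epsilon> \<Delta> :: real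
  assumes "0 < \<epsilon>" "\<epsilon> < 1" "\<epsilon> < \<Delta>"
  obtains s q :: nat where "3 \<le> real s * \<epsilon>" "0 < q" "23 * real s * \<Delta> \<le> 4 * real q"
    "real q \<le> 24 / \<epsilon> * \<Delta>"
proof -
  define s where "s = nat \<lceil>3 / \<epsilon>\<rceil>"
  define q where "q = nat \<lfloor>24 * \<Delta> / \<epsilon>\<rfloor>"
  have "real s = of_int \<lceil>3 / \<epsilon>\<rceil>" unfolding s_def using assms(1) by simp
  then have "real s \<ge> 3 / \<epsilon>" "real s < 3 / \<epsilon> + 1" by linarith+
  then have s_ge: "3 \<le> real s * \<epsilon>" and s_lt: "real s * \<epsilon> < 4"
    using assms(1,2) by (auto simp: field_simps)
  have "24 < 24 * \<Delta> / \<epsilon>" using assms by (simp add: field_simps)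
  then have "real q = of_int \<lfloor>24 * \<Delta> / \<epsilon>\<rfloor>" unfolding q_def by simp
  then have "real q \<le> 24 * \<Delta> / \<epsilon>" "24 * \<Delta> / \<epsilon> - 1 < real q" by linarith+
  then have q_le: "real q \<le> 24 / \<epsilon> * \<Delta>" and q_gt: "23 * \<Delta> / \<epsilon> < real q"
    using assms by (auto simp: field_simps)
  have "real s \<le> 4 / \<epsilon>" using s_lt assms(1) by (simp add: field_simps)
  then have "23 * real s * \<Delta> \<le> 23 * (4 / \<epsilon>) * \<Delta>" using assms by (intro mult_right_mono) auto
  also have "\<dots> < 4 * real q" using q_gt assms(1) by (simp add: field_simps)
  finally have "23 * real s * \<Delta> \<le> 4 * real q" by simp
  moreover have "0 < 23 * \<Delta> / \<epsilon>" using assms(1,3) by simp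
  with q_gt have "0 < q" by (metis of_nat_0_less_iff order.strict_trans)
  ultimately show ?thesis using that s_ge q_le by blast
qed

theorem theorem4p3:
  fixes n :: nat and D :: "nat pmf" and \<epsilon> :: real and l u :: "nat \<Rightarrow> real"
  assumes "set_pmf D \<subseteq> {1..n}"
    and "\<epsilon> > 0"
    and "\<forall>t\<in>{1..<n}. l t < u t"
  shows "\<exists>q T. real q \<le> 24 / \<epsilon> * Delta_star n D \<and> is_tester n l u D \<epsilon> q T"
proof -
  have lu: "\<forall>t\<in>{1..<n}. l t \<le> u t" using assms(3) by (simp add: less_imp_le)
  obtain t where t: "t \<in> bsts_on n"
    and \<Delta>: "Delta_star n D = measure_pmf.expectation D (\<lambda>v. real (bst_depth t v))"
    using Delta_star_attained by blast
  have bst: "bst t" using t by (rule bst_if_bsts_on)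
  have keys: "set_tree t = {1..n}" using t by (rule set_tree_if_bsts_on)
  have Delta_nonneg: "0 \<le> Delta_star n D" unfolding \<Delta> by (intro integral_nonneg_AE) auto
  show ?thesis
  proof (cases "\<epsilon> < 1 \<and> \<epsilon> < Delta_star n D")
    case False
    have "dist_bdp n l u D f \<le> \<epsilon>" for f
      using False dist_bdp_le_1[OF lu, of D f] dist_bdp_le_expected_depth[OF bst _ _ lu, of D f]
        keys assms(1) \<Delta> by auto
    then have "is_tester n l u D \<epsilon> 0 (return_pmf (Out True))" by (intro is_tester_accept_all allI)
    moreover have "real 0 \<le> 24 / \<epsilon> * Delta_star n D" using Delta_nonneg assms(2) by simp
    ultimately show ?thesis by blast
  next
    case True
    then obtain s q where "3 \<le> real s * \<epsilon>" "0 < q" "23 * real s * Delta_star n D \<le> 4 * real q"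
      and "real q \<le> 24 / \<epsilon> * Delta_star n D"
      using sample_and_query_sizes[of \<epsilon> "Delta_star n D"] assms(2) by blast
    moreover from this have "is_tester n l u D \<epsilon> q (path_tester n l u D t s q)"
      using keys assms(1) \<Delta> by (intro is_tester_path_tester[OF bst _ _ lu]) simp_all
    ultimately show ?thesis by blast
  qed
qed

end
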